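(* Let $d\ge 1$, $L>0$, $\rho>0$, $D_x>0$, $D_\theta\ge 0$, and $J_0,J,K\in\mathbb{R}$. Let $\Omega=\mathbb{R}^d/L\mathbb{Z}^d$ and $\mathbb{T}=\mathbb{R}/2\pi\mathbb{Z}$, let $T>0$, and let $R\in C^2([0,T)\times\Omega\times\mathbb{T})$ be a (real-valued, classical) solution of $$\partial_t R = D_x\nabla^2 R-\nabla\cdot\big(v_1(t,x,\theta;R)\,R\big)+D_\theta\,\partial_\theta^2 R-\partial_\theta\big(v_2(t,x,\theta;R)\,R\big),$$ with $v_1,v_2$ as defined in the context. Suppose the initial condition $R(0,x,\theta)=R_0(x,\theta)$ is a nonnegative continuous function. Then $R(t,x,\theta)\ge 0$ for all $0\le t<T$, $x\in\Omega$, $\theta\in\mathbb{T}$.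
   Context: Here $\nabla$, $\nabla\cdot$, $\nabla^2$ act in the spatial variable $x$; functions on $\Omega$ and $\mathbb{T}$ are identified with functions on $\mathbb{R}^d$ (resp. $\mathbb{R}$) that are $L$-periodic in each coordinate (resp. $2\pi$-periodic), so $x+\tilde x$ is understood modulo $L\mathbb{Z}^d$. $D_\rho(0)\subset\mathbb{R}^d$ is the open ball of radius $\rho$ centered at $0$. The velocities are $$v_1(t,x,\theta;R)=\int_0^{2\pi}\int_{D_\rho(0)}\big(J_0+J\cos(\theta-\tilde\theta)\big)\,R(t,x+\tilde x,\tilde\theta)\,\frac{\tilde x}{|\tilde x|}\,d^d\tilde x\,d\tilde\theta,$$ $$v_2(t,x,\theta;R)=K\int_0^{2\pi}\int_{D_\rho(0)}\sin(\tilde\theta-\theta)\,R(t,x+\tilde x,\tilde\theta)\,d^d\tilde x\,d\tilde\theta.$$ *)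

theory Defs
  imports "HOL-Analysis.Analysis"
begin

type_synonym 'd field = "real \<Rightarrow> real ^ 'd \<Rightarrow> real \<Rightarrow> real"

definition partial_t :: "('d::finite) field \<Rightarrow> 'd field" where
  "partial_t F t x th = deriv (\<lambda>s. F s x th) t"

definition partial_x :: "('d::finite) \<Rightarrow> 'd field \<Rightarrow> 'd field" where
  "partial_x i F t x th = deriv (\<lambda>s. F t (x + s *\<^sub>R axis i 1) th) 0"

definition partial_th :: "('d::finite) field \<Rightarrow> 'd field" where
  "partial_th F t x th = deriv (\<lambda>s. F t x s) th"

definition laplace_x :: "('d::finite) field \<Rightarrow> 'd field" where
  "laplace_x F t x th = (\<Sum>i\<in>UNIV. partial_x i (partial_x i F) t x th)"

definition div_x :: "(real \<Rightarrow> real ^ ('d::finite) \<Rightarrow> real \<Rightarrow> real ^ 'd) \<Rightarrow> 'd field" where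
  "div_x G t x th = (\<Sum>i\<in>UNIV. partial_x i (\<lambda>s y a. G s y a $ i) t x th)"

definition uncurry3 :: "('d::finite) field \<Rightarrow> real \<times> (real ^ 'd) \<times> real \<Rightarrow> real" where
  "uncurry3 F p = F (fst p) (fst (snd p)) (snd (snd p))"

definition C2_on :: "('a::euclidean_space) set \<Rightarrow> ('a \<Rightarrow> real) \<Rightarrow> bool" where
  "C2_on S f \<longleftrightarrow> (\<exists>(f1 :: 'a \<Rightarrow> 'a \<Rightarrow>\<^sub>L real) (f2 :: 'a \<Rightarrow> 'a \<Rightarrow>\<^sub>L ('a \<Rightarrow>\<^sub>L real)).
      (\<forall>p\<in>S. (f has_derivative blinfun_apply (f1 p)) (at p within S)) \<and> continuous_on S f1 \<and>
      (\<forall>p\<in>S. (f1 has_derivative blinfun_apply (f2 p)) (at p within S)) \<and> continuous_on S f2)"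

text \<open>Periodicity: functions on Omega = R^d / L Z^d and T = R / 2 pi Z.\<close>
definition periodic_field :: "real \<Rightarrow> ('d::finite) field \<Rightarrow> bool" where
  "periodic_field L F \<longleftrightarrow>
     (\<forall>t x th i. F t (x + L *\<^sub>R axis i 1) th = F t x th) \<and>
     (\<forall>t x th. F t x (th + 2 * pi) = F t x th)"

definition v1 :: "real \<Rightarrow> real \<Rightarrow> real \<Rightarrow> ('d::finite) field \<Rightarrow> real \<Rightarrow> real ^ 'd \<Rightarrow> real \<Rightarrow> real ^ 'd" where
  "v1 J0 J \<rho> R t x th = integral {0..2*pi} (\<lambda>th'.
      integral (ball 0 \<rho>) (\<lambda>y. ((J0 + J * cos (th - th')) * R t (x + y) th' / norm y) *\<^sub>R y))"

definition v2 :: "real \<Rightarrow> real \<Rightarrow> ('d::finite) field \<Rightarrow> real \<Rightarrow> real ^ 'd \<Rightarrow> real \<Rightarrow> real" where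
  "v2 K \<rho> R t x th = K * integral {0..2*pi} (\<lambda>th'.
      integral (ball 0 \<rho>) (\<lambda>y. sin (th' - th) * R t (x + y) th'))"

end

theory Submission
  imports Defs
begin

text \<open>A minimum principle with an exponential barrier. Fix \<open>T' < T\<close>. On the compact set
  \<open>[0,T'] \<times> (fundamental cell + ball) \<times> [0,2\<pi>]\<close> the solution and its first two derivatives are
  bounded, so both nonlocal velocities can be differentiated under the integral sign with bounds
  independent of the point. At a spatial minimum of \<open>R(t,\<cdot>,\<cdot>)\<close> the gradient vanishes and the
  second derivatives are nonnegative, so the transport terms reduce to \<open>R (div v1 + \<partial>\<theta> v2)\<close> and
  the diffusion terms are nonnegative; if moreover \<open>R \<le> 0\<close> this gives \<open>\<partial>t R \<ge> C R\<close>. Hence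
  \<open>R + \<epsilon> e\<^sup>\<lambda>\<^sup>t\<close> with \<open>\<lambda> > C\<close> cannot reach zero for a first time, and \<open>\<epsilon> \<rightarrow> 0\<close> gives \<open>R \<ge> 0\<close>.\<close>

section \<open>Calculus of one real variable\<close>

lemma quadratic_remainder_bound:
  fixes \<phi> \<phi>' \<phi>'' :: "real \<Rightarrow> real"
  assumes \<phi>': "\<And>r. \<bar>r\<bar> \<le> \<bar>h\<bar> \<Longrightarrow> (\<phi> has_real_derivative \<phi>' r) (at r)"
    and \<phi>'': "\<And>r. \<bar>r\<bar> \<le> \<bar>h\<bar> \<Longrightarrow> (\<phi>' has_real_derivative \<phi>'' r) (at r)"
    and bound: "\<And>r. \<bar>r\<bar> \<le> \<bar>h\<bar> \<Longrightarrow> \<bar>\<phi>'' r\<bar> \<le> M"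
  shows "\<bar>\<phi> h - \<phi> 0 - h * \<phi>' 0\<bar> \<le> M * h\<^sup>2"
proof -
  let ?S = "{-\<bar>h\<bar>..\<bar>h\<bar>}"
  have M: "M \<ge> 0" using bound[of 0] by auto
  have slope: "norm (\<phi>' r - \<phi>' 0) \<le> M * \<bar>h\<bar>" if r: "r \<in> ?S" for r
  proof -
    have "norm (\<phi>' r - \<phi>' 0) \<le> M * norm (r - 0)"
      by (rule field_differentiable_bound[of ?S \<phi>' \<phi>'' M r 0])
        (use r \<phi>'' bound in \<open>auto intro: has_field_derivative_at_within\<close>)
    also have "\<dots> \<le> M * \<bar>h\<bar>" using r M by (auto intro: mult_left_mono)
    finally show ?thesis .
  qed
  have "norm (\<phi> h - \<phi> 0 - (h - 0) *\<^sub>R \<phi>' 0) \<le> norm (h - 0) * (M * \<bar>h\<bar>)"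
    by (rule vector_differentiable_bound_linearization[of ?S])
      (use \<phi>' slope in \<open>auto simp: closed_segment_eq_real_ivl
         has_real_derivative_iff_has_vector_derivative[symmetric] intro: has_field_derivative_at_within\<close>)
  then show ?thesis by (simp add: power2_eq_square mult_ac)
qed

lemma global_min_deriv_conditions:
  fixes \<phi> \<phi>' :: "real \<Rightarrow> real"
  assumes \<phi>': "\<And>r. (\<phi> has_real_derivative \<phi>' r) (at r)"
    and \<phi>'': "(\<phi>' has_real_derivative D) (at c)"
    and min: "\<And>r. \<phi> c \<le> \<phi> r"
  shows "\<phi>' c = 0" and "D \<ge> 0"
proof -
  show crit: "\<phi>' c = 0" using DERIV_local_min[OF \<phi>' zero_less_one] min by auto
  show "D \<ge> 0"
  proof (rule ccontr)
    assume "\<not> D \<ge> 0"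
    then obtain d where "d > 0" and dec: "\<And>h. 0 < h \<Longrightarrow> h < d \<Longrightarrow> \<phi>' (c + h) < \<phi>' c"
      using DERIV_neg_dec_right[OF \<phi>''] by force
    then have "c < c + d / 2" by simp
    then obtain z where z: "c < z" "z < c + d / 2" and mvt: "\<phi> (c + d / 2) - \<phi> c = (c + d / 2 - c) * \<phi>' z"
      using MVT2[of c "c + d / 2" \<phi> \<phi>'] \<phi>' by blast
    have "\<phi>' z < 0" using dec[of "z - c"] z crit by simp
    then have "(c + d / 2 - c) * \<phi>' z < 0" using \<open>d > 0\<close> by (intro mult_pos_neg) auto
    then have "\<phi> (c + d / 2) < \<phi> c" using mvt by linarith
    then show False using min[of "c + d / 2"] by simp
  qed
qed

lemma has_real_derivative_nonpos_at_left_min: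
  assumes "(f has_real_derivative D) (at c)" "a < c" "\<And>s. a \<le> s \<Longrightarrow> s < c \<Longrightarrow> f c \<le> f s"
  shows "D \<le> 0"
proof (rule ccontr)
  assume "\<not> D \<le> 0"
  then obtain d where "d > 0" and inc: "\<And>h. 0 < h \<Longrightarrow> h < d \<Longrightarrow> f (c - h) < f c"
    using DERIV_pos_inc_left[OF assms(1)] by force
  define h where "h = min (d / 2) (c - a)"
  have "0 < h" "h < d" "a \<le> c - h" using \<open>d > 0\<close> \<open>a < c\<close> by (auto simp: h_def)
  then show False using inc[of h] assms(3)[of "c - h"] by simp
qed

lemma has_vector_derivative_quadratic_remainder:
  fixes F :: "real \<Rightarrow> 'b::real_normed_vector"
  assumes "\<delta> > 0" and remainder: "\<And>h. \<bar>h\<bar> \<le> \<delta> \<Longrightarrow> norm (F (s + h) - F s - h *\<^sub>R D) \<le> M * h\<^sup>2"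
  shows "(F has_vector_derivative D) (at s)"
  unfolding has_vector_derivative_def has_derivative_at_alt
proof (intro conjI allI impI)
  show "bounded_linear (\<lambda>h. h *\<^sub>R D)" by (rule bounded_linear_scaleR_left)
  fix e :: real assume "e > 0"
  define d where "d = min \<delta> (e / (\<bar>M\<bar> + 1))"
  have "d > 0" using \<open>e > 0\<close> \<open>\<delta> > 0\<close> by (simp add: d_def)
  moreover have "norm (F y - F s - (y - s) *\<^sub>R D) \<le> e * norm (y - s)" if "norm (y - s) < d" for y
  proof -
    define h where "h = y - s"
    have "\<bar>h\<bar> \<le> \<delta>" using that by (simp add: h_def d_def)
    have "\<bar>h\<bar> < e / (\<bar>M\<bar> + 1)" using that by (simp add: h_def d_def)
    then have "\<bar>h\<bar> * (\<bar>M\<bar> + 1) \<le> e"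
      by (simp add: pos_less_divide_eq add_nonneg_pos less_imp_le)
    have "norm (F y - F s - (y - s) *\<^sub>R D) \<le> M * h\<^sup>2"
      using remainder[OF \<open>\<bar>h\<bar> \<le> \<delta>\<close>] by (simp add: h_def)
    also have "\<dots> \<le> (\<bar>M\<bar> + 1) * \<bar>h\<bar>\<^sup>2" by (simp add: mult_right_mono)
    also have "\<dots> = (\<bar>h\<bar> * (\<bar>M\<bar> + 1)) * \<bar>h\<bar>" by (simp add: power2_eq_square)
    also have "\<dots> \<le> e * \<bar>h\<bar>" using \<open>\<bar>h\<bar> * (\<bar>M\<bar> + 1) \<le> e\<close> by (simp add: mult_right_mono)
    finally show ?thesis by (simp add: h_def)
  qed
  ultimately show "\<exists>d>0. \<forall>y. norm (y - s) < d \<longrightarrow> norm (F y - F s - (y - s) *\<^sub>R D) \<le> e * norm (y - s)"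
    by blast
qed

section \<open>Parametric integrals over a ball\<close>

lemma continuous_on_uncurried_compose:
  assumes "continuous_on UNIV (\<lambda>z. F (fst z) (snd z))" "continuous_on A X" "continuous_on A Y"
  shows "continuous_on A (\<lambda>w. F (X w) (Y w))"
  using continuous_on_compose2[OF assms(1), of A "\<lambda>w. (X w, Y w)"] assms(2,3)
  by (simp add: continuous_on_Pair)

lemma continuous_on_slice:
  assumes "continuous_on (A \<times> B) (\<lambda>(x, y). c x y)" "x \<in> A"
  shows "continuous_on B (c x)"
proof -
  have "continuous_on B (\<lambda>y. (x, y))" by (intro continuous_intros)
  moreover have "(\<lambda>y. (x, y)) ` B \<subseteq> A \<times> B" using assms(2) by blast
  ultimately have "continuous_on B (\<lambda>y. (\<lambda>(x, y). c x y) (x, y))"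
    by (rule continuous_on_compose2[OF assms(1)])
  then show ?thesis by simp
qed

lemma norm_scaleR_le_abs: "norm k \<le> 1 \<Longrightarrow> norm (c *\<^sub>R k) \<le> \<bar>c\<bar>"
  by (simp add: mult_left_le)

lemma integrable_on_ball_scaleR_bounded:
  fixes a :: "'a::euclidean_space \<Rightarrow> real" and k :: "'a \<Rightarrow> 'b::euclidean_space"
  assumes a: "continuous_on (cball 0 r) a"
    and k: "k \<in> borel_measurable lebesgue" "\<And>y. norm (k y) \<le> 1"
  shows "(\<lambda>y. a y *\<^sub>R k y) integrable_on ball 0 r"
proof -
  obtain B where B: "\<And>y. y \<in> cball 0 r \<Longrightarrow> norm (a y) \<le> B"
    using continuous_on_compact_bound[OF compact_cball a] by blast
  have "a \<in> borel_measurable (lebesgue_on (ball 0 r))"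
    using continuous_imp_measurable_on_sets_lebesgue[of "ball 0 r" a]
      continuous_on_subset[OF a ball_subset_cball] by simp
  moreover have "k \<in> borel_measurable (lebesgue_on (ball 0 r))"
    using k(1) by (simp add: measurable_restrict_space1)
  ultimately have "(\<lambda>y. a y *\<^sub>R k y) \<in> borel_measurable (lebesgue_on (ball 0 r))"
    by measurable
  moreover have "norm (a y *\<^sub>R k y) \<le> B" if "y \<in> ball 0 r" for y
  proof -
    have "norm (a y *\<^sub>R k y) \<le> norm (a y)" using norm_scaleR_le_abs[OF k(2)] by simp
    also have "\<dots> \<le> B" using B that by auto
    finally show ?thesis .
  qed
  ultimately have "(\<lambda>y. a y *\<^sub>R k y) absolutely_integrable_on ball 0 r"
    by (intro measurable_bounded_by_integrable_imp_absolutely_integrable[where g="\<lambda>_. B"])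
      (simp_all add: integrable_on_const)
  then show ?thesis using set_lebesgue_integral_eq_integral(1) by blast
qed

lemma norm_integral_le_measure:
  fixes f :: "'a::euclidean_space \<Rightarrow> 'b::euclidean_space"
  assumes S: "S \<in> lmeasurable" and f: "f integrable_on S"
    and bound: "\<And>y. y \<in> S \<Longrightarrow> norm (f y) \<le> B"
  shows "norm (integral S f) \<le> B * measure lebesgue S"
proof -
  have "norm (integral S f) \<le> integral S (\<lambda>_. B)"
    using S bound by (intro integral_norm_bound_integral[OF f]) (auto intro: integrable_on_const)
  also have "\<dots> = B * measure lebesgue S"
    using lmeasure_integral[OF S] integral_mult_left[of S "\<lambda>_. 1::real" B] by simp
  finally show ?thesis .
qed

lemma has_vector_derivative_integral_quadratic_remainder:
  fixes f :: "real \<Rightarrow> 'a::euclidean_space \<Rightarrow> 'b::euclidean_space"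
  assumes S: "S \<in> lmeasurable"
    and f: "\<And>h. \<bar>h\<bar> \<le> 1 \<Longrightarrow> f h integrable_on S" and g: "g integrable_on S"
    and remainder: "\<And>h y. \<bar>h\<bar> \<le> 1 \<Longrightarrow> y \<in> S \<Longrightarrow> norm (f h y - f 0 y - h *\<^sub>R g y) \<le> M * h\<^sup>2"
  shows "((\<lambda>h. integral S (f h)) has_vector_derivative integral S g) (at 0)"
proof (rule has_vector_derivative_quadratic_remainder[where \<delta>=1 and M="M * measure lebesgue S"])
  fix h :: real assume h: "\<bar>h\<bar> \<le> 1"
  have "integral S (f (0 + h)) - integral S (f 0) - h *\<^sub>R integral S g
      = integral S (\<lambda>y. f h y - f 0 y - h *\<^sub>R g y)"
    using f[OF h] f[of 0] g by (simp add: integral_diff integrable_diff integrable_cmul)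
  also have "norm \<dots> \<le> M * h\<^sup>2 * measure lebesgue S"
    using f[OF h] f[of 0] g remainder[OF h] S
    by (intro norm_integral_le_measure) (auto intro!: integrable_diff integrable_cmul)
  finally show "norm (integral S (f (0 + h)) - integral S (f 0) - h *\<^sub>R integral S g)
      \<le> M * measure lebesgue S * h\<^sup>2"
    by (simp add: mult_ac)
qed simp

lemma continuous_on_integral_ball_param:
  fixes a :: "'p::metric_space \<Rightarrow> 'a::euclidean_space \<Rightarrow> real" and k :: "'a \<Rightarrow> 'b::euclidean_space"
  assumes P: "compact P" and a: "continuous_on (P \<times> cball 0 r) (\<lambda>(p, y). a p y)"
    and k: "k \<in> borel_measurable lebesgue" "\<And>y. norm (k y) \<le> 1"
  shows "continuous_on P (\<lambda>p. integral (ball 0 r) (\<lambda>y. a p y *\<^sub>R k y))"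
proof -
  let ?\<mu> = "measure lebesgue (ball (0::'a) r)"
  have integrable: "(\<lambda>y. a p y *\<^sub>R k y) integrable_on ball 0 r" if "p \<in> P" for p
    using continuous_on_slice[OF a that] by (rule integrable_on_ball_scaleR_bounded[OF _ k])
  have uc: "uniformly_continuous_on (P \<times> cball 0 r) (\<lambda>(p, y). a p y)"
    using P by (intro compact_uniformly_continuous[OF a] compact_Times compact_cball)
  show ?thesis unfolding continuous_on_iff
  proof (intro ballI allI impI)
    fix p and e :: real assume p: "p \<in> P" and "e > 0"
    have "e / (?\<mu> + 1) > 0" using \<open>e > 0\<close> by (simp add: add_nonneg_pos)
    then obtain d where "d > 0" and d: "\<And>z z'. z \<in> P \<times> cball 0 r \<Longrightarrow> z' \<in> P \<times> cball 0 r \<Longrightarrow>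
        dist z' z < d \<Longrightarrow> dist ((\<lambda>(p, y). a p y) z') ((\<lambda>(p, y). a p y) z) < e / (?\<mu> + 1)"
      using uc unfolding uniformly_continuous_on_def by metis
    have "dist (integral (ball 0 r) (\<lambda>y. a p' y *\<^sub>R k y)) (integral (ball 0 r) (\<lambda>y. a p y *\<^sub>R k y)) < e"
      if p': "p' \<in> P" "dist p' p < d" for p'
    proof -
      have close: "norm ((a p' y - a p y) *\<^sub>R k y) \<le> e / (?\<mu> + 1)" if "y \<in> ball 0 r" for y
      proof -
        have "\<bar>a p' y - a p y\<bar> \<le> e / (?\<mu> + 1)"
          using d[of "(p, y)" "(p', y)"] p p' that by (auto simp: dist_Pair_Pair dist_real_def)
        moreover have "norm ((a p' y - a p y) *\<^sub>R k y) \<le> \<bar>a p' y - a p y\<bar>"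
          by (rule norm_scaleR_le_abs[OF k(2)])
        ultimately show ?thesis by linarith
      qed
      have "dist (integral (ball 0 r) (\<lambda>y. a p' y *\<^sub>R k y)) (integral (ball 0 r) (\<lambda>y. a p y *\<^sub>R k y))
          = norm (integral (ball 0 r) (\<lambda>y. (a p' y - a p y) *\<^sub>R k y))"
        using integrable[OF p] integrable[OF p'(1)]
        by (simp add: dist_norm integral_diff[symmetric] scaleR_diff_left)
      also have "\<dots> \<le> e / (?\<mu> + 1) * ?\<mu>"
        using integrable[OF p] integrable[OF p'(1)] close
        by (intro norm_integral_le_measure) (auto simp: scaleR_diff_left intro!: integrable_diff)
      also have "\<dots> < e"
        using \<open>e > 0\<close> by (simp add: divide_simps add_nonneg_pos)
      finally show ?thesis .
    qed
    with \<open>d > 0\<close> show "\<exists>d>0. \<forall>p'\<in>P. dist p' p < d \<longrightarrow>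
        dist (integral (ball 0 r) (\<lambda>y. a p' y *\<^sub>R k y)) (integral (ball 0 r) (\<lambda>y. a p y *\<^sub>R k y)) < e"
      by blast
  qed
qed

lemma has_vector_derivative_iterated_integral:
  fixes a :: "real \<Rightarrow> real \<Rightarrow> 'a::euclidean_space \<Rightarrow> real" and b :: "real \<Rightarrow> 'a \<Rightarrow> real"
    and k :: "'a \<Rightarrow> 'b::euclidean_space"
  assumes a: "\<And>h. continuous_on ({lo..hi} \<times> cball 0 r) (\<lambda>(\<theta>, y). a h \<theta> y)"
    and b: "continuous_on ({lo..hi} \<times> cball 0 r) (\<lambda>(\<theta>, y). b \<theta> y)"
    and k: "k \<in> borel_measurable lebesgue" "\<And>y. norm (k y) \<le> 1"
    and remainder: "\<And>h \<theta> y. \<bar>h\<bar> \<le> 1 \<Longrightarrow> \<theta> \<in> {lo..hi} \<Longrightarrow> y \<in> ball 0 r \<Longrightarrow>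
      \<bar>a h \<theta> y - a 0 \<theta> y - h * b \<theta> y\<bar> \<le> M * h\<^sup>2"
  shows "((\<lambda>h. integral {lo..hi} (\<lambda>\<theta>. integral (ball 0 r) (\<lambda>y. a h \<theta> y *\<^sub>R k y)))
    has_vector_derivative integral {lo..hi} (\<lambda>\<theta>. integral (ball 0 r) (\<lambda>y. b \<theta> y *\<^sub>R k y))) (at 0)"
proof (rule has_vector_derivative_integral_quadratic_remainder[where M="M * measure lebesgue (ball (0::'a) r)"])
  show "(\<lambda>\<theta>. integral (ball 0 r) (\<lambda>y. a h \<theta> y *\<^sub>R k y)) integrable_on {lo..hi}" for h
    by (intro integrable_continuous_interval continuous_on_integral_ball_param a k) simp
  show "(\<lambda>\<theta>. integral (ball 0 r) (\<lambda>y. b \<theta> y *\<^sub>R k y)) integrable_on {lo..hi}"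
    by (intro integrable_continuous_interval continuous_on_integral_ball_param b k) simp
  fix h \<theta> :: real assume h: "\<bar>h\<bar> \<le> 1" and \<theta>: "\<theta> \<in> {lo..hi}"
  have integrable: "(\<lambda>y. c y *\<^sub>R k y) integrable_on ball 0 r" if "continuous_on (cball 0 r) c" for c
    using integrable_on_ball_scaleR_bounded[OF that k] .
  have ah: "continuous_on (cball 0 r) (a h' \<theta>)" for h' by (rule continuous_on_slice[OF a \<theta>])
  have b\<theta>: "continuous_on (cball 0 r) (b \<theta>)" by (rule continuous_on_slice[OF b \<theta>])
  let ?A = "\<lambda>h y. a h \<theta> y *\<^sub>R k y"
  let ?B = "\<lambda>y. b \<theta> y *\<^sub>R k y"
  have integrand: "(\<lambda>y. (a h \<theta> y - a 0 \<theta> y - h * b \<theta> y) *\<^sub>R k y)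
      = (\<lambda>y. (?A h y - ?A 0 y) - h *\<^sub>R ?B y)"
    by (simp add: algebra_simps)
  have "integral (ball 0 r) (?A h) - integral (ball 0 r) (?A 0) - h *\<^sub>R integral (ball 0 r) ?B
      = integral (ball 0 r) (\<lambda>y. (a h \<theta> y - a 0 \<theta> y - h * b \<theta> y) *\<^sub>R k y)"
    unfolding integrand using integrable[OF ah] integrable[OF b\<theta>]
    by (simp only: integral_diff integrable_diff integrable_cmul integral_cmul)
  also have "norm \<dots> \<le> M * h\<^sup>2 * measure lebesgue (ball (0::'a) r)"
  proof (rule norm_integral_le_measure)
    show "(\<lambda>y. (a h \<theta> y - a 0 \<theta> y - h * b \<theta> y) *\<^sub>R k y) integrable_on ball 0 r"
      using ah b\<theta> by (intro integrable continuous_intros)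
    fix y :: 'a assume "y \<in> ball 0 r"
    then have "\<bar>a h \<theta> y - a 0 \<theta> y - h * b \<theta> y\<bar> \<le> M * h\<^sup>2" using remainder h \<theta> by blast
    then show "norm ((a h \<theta> y - a 0 \<theta> y - h * b \<theta> y) *\<^sub>R k y) \<le> M * h\<^sup>2"
      using norm_scaleR_le_abs[OF k(2)] order_trans by blast
  qed simp
  finally show "norm (integral (ball 0 r) (\<lambda>y. a h \<theta> y *\<^sub>R k y) - integral (ball 0 r) (\<lambda>y. a 0 \<theta> y *\<^sub>R k y)
        - h *\<^sub>R integral (ball 0 r) (\<lambda>y. b \<theta> y *\<^sub>R k y))
      \<le> M * measure lebesgue (ball (0::'a) r) * h\<^sup>2"
    by (simp add: mult_ac)
qed simp

lemma norm_iterated_integral_le: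
  fixes b :: "real \<Rightarrow> 'a::euclidean_space \<Rightarrow> real" and k :: "'a \<Rightarrow> 'b::euclidean_space"
  assumes "lo \<le> hi" and b: "continuous_on ({lo..hi} \<times> cball 0 r) (\<lambda>(\<theta>, y). b \<theta> y)"
    and k: "k \<in> borel_measurable lebesgue" "\<And>y. norm (k y) \<le> 1"
    and bound: "\<And>\<theta> y. \<theta> \<in> {lo..hi} \<Longrightarrow> y \<in> ball 0 r \<Longrightarrow> \<bar>b \<theta> y\<bar> \<le> B"
  shows "norm (integral {lo..hi} (\<lambda>\<theta>. integral (ball 0 r) (\<lambda>y. b \<theta> y *\<^sub>R k y)))
    \<le> (hi - lo) * (measure lebesgue (ball (0::'a) r) * B)"
proof -
  have "norm (integral (ball 0 r) (\<lambda>y. b \<theta> y *\<^sub>R k y)) \<le> B * measure lebesgue (ball (0::'a) r)"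
    if \<theta>: "\<theta> \<in> {lo..hi}" for \<theta>
  proof (rule norm_integral_le_measure)
    show "(\<lambda>y. b \<theta> y *\<^sub>R k y) integrable_on ball 0 r"
      by (intro integrable_on_ball_scaleR_bounded k continuous_on_slice[OF b \<theta>])
    fix y :: 'a assume "y \<in> ball 0 r"
    then have "\<bar>b \<theta> y\<bar> \<le> B" by (rule bound[OF \<theta>])
    then show "norm (b \<theta> y *\<^sub>R k y) \<le> B" using norm_scaleR_le_abs[OF k(2)] order_trans by blast
  qed simp
  then have "norm (integral {lo..hi} (\<lambda>\<theta>. integral (ball 0 r) (\<lambda>y. b \<theta> y *\<^sub>R k y)))
      \<le> B * measure lebesgue (ball (0::'a) r) * (hi - lo)"
    by (intro integral_bound \<open>lo \<le> hi\<close> continuous_on_integral_ball_param b k) auto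
  then show ?thesis by (simp add: mult_ac)
qed

section \<open>Differentiability of the velocities\<close>

lemma sgn_borel_measurable_lebesgue: "(sgn :: 'a::euclidean_space \<Rightarrow> 'a) \<in> borel_measurable lebesgue"
  by (simp add: measurable_completion)

lemma norm_sgn_le: "norm (sgn (y::'a::real_normed_vector)) \<le> 1"
  by (simp add: norm_sgn)

lemma v1_has_vector_derivative_along:
  fixes R :: "'d::finite field" and Rx :: "real^'d \<Rightarrow> real \<Rightarrow> real" and e x :: "real^'d"
  assumes R: "continuous_on UNIV (\<lambda>z::(real^'d) \<times> real. R t (fst z) (snd z))"
    and Rx: "continuous_on UNIV (\<lambda>z::(real^'d) \<times> real. Rx (fst z) (snd z))"
    and remainder: "\<And>y \<theta> h. y \<in> ball 0 \<rho> \<Longrightarrow> \<theta> \<in> {0..2*pi} \<Longrightarrow> \<bar>h\<bar> \<le> 1 \<Longrightarrow>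
      \<bar>R t (x + h *\<^sub>R e + y) \<theta> - R t (x + y) \<theta> - h * Rx (x + y) \<theta>\<bar> \<le> M2 * h\<^sup>2"
    and Rx_bound: "\<And>y \<theta>. y \<in> ball 0 \<rho> \<Longrightarrow> \<theta> \<in> {0..2*pi} \<Longrightarrow> \<bar>Rx (x + y) \<theta>\<bar> \<le> M1"
  obtains D where "((\<lambda>s. v1 J0 J \<rho> R t (x + s *\<^sub>R e) th) has_vector_derivative D) (at 0)"
    and "norm D \<le> 2 * pi * (measure lebesgue (ball (0::real^'d) \<rho>) * ((\<bar>J0\<bar> + \<bar>J\<bar>) * M1))"
proof -
  define c where "c \<theta> = J0 + J * cos (th - \<theta>)" for \<theta>
  have c: "\<bar>c \<theta>\<bar> \<le> \<bar>J0\<bar> + \<bar>J\<bar>" for \<theta>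
    using abs_triangle_ineq[of J0 "J * cos (th - \<theta>)"] abs_cos_le_one[of "th - \<theta>"]
      mult_left_le[of "\<bar>cos (th - \<theta>)\<bar>" "\<bar>J\<bar>"]
    by (simp add: c_def abs_mult)
  \<comment> \<open>the kernel \<open>y / |y|\<close> of \<open>v1\<close> is \<open>sgn y\<close>\<close>
  have v1_eq: "v1 J0 J \<rho> R t (x + s *\<^sub>R e) th = integral {0..2*pi} (\<lambda>\<theta>.
      integral (ball 0 \<rho>) (\<lambda>y. (c \<theta> * R t (x + s *\<^sub>R e + y) \<theta>) *\<^sub>R sgn y))" for s
    by (simp add: v1_def c_def sgn_div_norm divide_inverse add.assoc)
  let ?b = "\<lambda>\<theta> y. c \<theta> * Rx (x + y) \<theta>"
  have b: "continuous_on ({0..2*pi} \<times> cball 0 \<rho>) (\<lambda>(\<theta>, y). ?b \<theta> y)"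
    unfolding c_def split_def
    by (intro continuous_intros continuous_on_uncurried_compose[OF Rx])
  have "((\<lambda>s. v1 J0 J \<rho> R t (x + s *\<^sub>R e) th) has_vector_derivative
      integral {0..2*pi} (\<lambda>\<theta>. integral (ball 0 \<rho>) (\<lambda>y. ?b \<theta> y *\<^sub>R sgn y))) (at 0)"
    unfolding v1_eq
  proof (rule has_vector_derivative_iterated_integral[OF _ b sgn_borel_measurable_lebesgue
        norm_sgn_le, where M="(\<bar>J0\<bar> + \<bar>J\<bar>) * M2"])
    show "continuous_on ({0..2*pi} \<times> cball 0 \<rho>) (\<lambda>(\<theta>, y). c \<theta> * R t (x + h *\<^sub>R e + y) \<theta>)" for h
      unfolding c_def split_def
      by (intro continuous_intros continuous_on_uncurried_compose[OF R])
    fix h \<theta> :: real and y :: "real^'d"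
    assume "\<bar>h\<bar> \<le> 1" "\<theta> \<in> {0..2*pi}" "y \<in> ball 0 \<rho>"
    then have "\<bar>c \<theta>\<bar> * \<bar>R t (x + h *\<^sub>R e + y) \<theta> - R t (x + y) \<theta> - h * Rx (x + y) \<theta>\<bar>
        \<le> (\<bar>J0\<bar> + \<bar>J\<bar>) * (M2 * h\<^sup>2)"
      using c remainder by (intro mult_mono) auto
    then show "\<bar>c \<theta> * R t (x + h *\<^sub>R e + y) \<theta> - c \<theta> * R t (x + 0 *\<^sub>R e + y) \<theta> - h * ?b \<theta> y\<bar>
        \<le> (\<bar>J0\<bar> + \<bar>J\<bar>) * M2 * h\<^sup>2"
      by (simp add: abs_mult[symmetric] algebra_simps)
  qed
  moreover have "norm (integral {0..2*pi} (\<lambda>\<theta>. integral (ball 0 \<rho>) (\<lambda>y. ?b \<theta> y *\<^sub>R sgn y)))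
      \<le> (2 * pi - 0) * (measure lebesgue (ball (0::real^'d) \<rho>) * ((\<bar>J0\<bar> + \<bar>J\<bar>) * M1))"
    using c Rx_bound
    by (intro norm_iterated_integral_le b sgn_borel_measurable_lebesgue norm_sgn_le)
      (auto simp: abs_mult intro: mult_mono)
  ultimately show thesis using that by simp
qed

lemma sin_quadratic_remainder:
  fixes a b h :: real
  shows "\<bar>sin (a - (b + h)) - sin (a - b) - h * - cos (a - b)\<bar> \<le> h\<^sup>2"
proof -
  have "\<bar>sin (a - (b + h)) - sin (a - (b + 0)) - h * - cos (a - (b + 0))\<bar> \<le> 1 * h\<^sup>2"
    by (rule quadratic_remainder_bound[where \<phi>'' = "\<lambda>r. - sin (a - (b + r))"])
      (auto intro!: derivative_eq_intros)
  then show ?thesis by simp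
qed

lemma v2_has_real_derivative_theta:
  fixes R :: "'d::finite field" and x :: "real^'d"
  assumes R: "continuous_on UNIV (\<lambda>z::(real^'d) \<times> real. R t (fst z) (snd z))"
    and R_bound: "\<And>y \<theta>. y \<in> ball 0 \<rho> \<Longrightarrow> \<theta> \<in> {0..2*pi} \<Longrightarrow> \<bar>R t (x + y) \<theta>\<bar> \<le> M0"
  obtains D where "(v2 K \<rho> R t x has_real_derivative D) (at th)"
    and "\<bar>D\<bar> \<le> \<bar>K\<bar> * (2 * pi * (measure lebesgue (ball (0::real^'d) \<rho>) * M0))"
proof -
  define I where "I s = integral {0..2*pi} (\<lambda>\<theta>.
      integral (ball 0 \<rho>) (\<lambda>y. (sin (\<theta> - (th + s)) * R t (x + y) \<theta>) *\<^sub>R (1::real)))" for s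
  let ?b = "\<lambda>\<theta> y. - cos (\<theta> - th) * R t (x + y) \<theta>"
  have b: "continuous_on ({0..2*pi} \<times> cball 0 \<rho>) (\<lambda>(\<theta>, y). ?b \<theta> y)"
    unfolding split_def by (intro continuous_intros continuous_on_uncurried_compose[OF R])
  have "(I has_vector_derivative
      integral {0..2*pi} (\<lambda>\<theta>. integral (ball 0 \<rho>) (\<lambda>y. ?b \<theta> y *\<^sub>R (1::real)))) (at 0)"
    unfolding I_def
  proof (rule has_vector_derivative_iterated_integral[OF _ b, where M=M0])
    show "continuous_on ({0..2*pi} \<times> cball 0 \<rho>) (\<lambda>(\<theta>, y). sin (\<theta> - (th + h)) * R t (x + y) \<theta>)" for h
      unfolding split_def by (intro continuous_intros continuous_on_uncurried_compose[OF R])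
    fix h \<theta> :: real and y :: "real^'d"
    assume "\<bar>h\<bar> \<le> 1" "\<theta> \<in> {0..2*pi}" "y \<in> ball 0 \<rho>"
    then have "\<bar>sin (\<theta> - (th + h)) - sin (\<theta> - th) - h * - cos (\<theta> - th)\<bar> * \<bar>R t (x + y) \<theta>\<bar> \<le> h\<^sup>2 * M0"
      using sin_quadratic_remainder R_bound by (intro mult_mono) auto
    then show "\<bar>sin (\<theta> - (th + h)) * R t (x + y) \<theta> - sin (\<theta> - (th + 0)) * R t (x + y) \<theta> - h * ?b \<theta> y\<bar>
        \<le> M0 * h\<^sup>2"
      by (simp add: abs_mult[symmetric] algebra_simps)
  qed auto
  then have "((\<lambda>s. K * I s) has_real_derivative
      K * integral {0..2*pi} (\<lambda>\<theta>. integral (ball 0 \<rho>) (\<lambda>y. ?b \<theta> y *\<^sub>R (1::real)))) (at 0)"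
    by (intro DERIV_cmult) (simp add: has_real_derivative_iff_has_vector_derivative)
  moreover have "(\<lambda>s. K * I s) = (\<lambda>s. v2 K \<rho> R t x (s + th))"
    by (simp add: v2_def I_def add.commute)
  ultimately have "(v2 K \<rho> R t x has_real_derivative
      K * integral {0..2*pi} (\<lambda>\<theta>. integral (ball 0 \<rho>) (\<lambda>y. ?b \<theta> y *\<^sub>R (1::real)))) (at th)"
    using DERIV_shift[of "v2 K \<rho> R t x" _ 0 th] by simp
  moreover have "norm (integral {0..2*pi} (\<lambda>\<theta>. integral (ball 0 \<rho>) (\<lambda>y. ?b \<theta> y *\<^sub>R (1::real))))
      \<le> (2 * pi - 0) * (measure lebesgue (ball (0::real^'d) \<rho>) * M0)"
  proof (rule norm_iterated_integral_le[OF _ b])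
    fix \<theta> and y :: "real^'d" assume "\<theta> \<in> {0..2*pi}" "y \<in> ball 0 \<rho>"
    then have "\<bar>- cos (\<theta> - th)\<bar> * \<bar>R t (x + y) \<theta>\<bar> \<le> 1 * M0"
      using R_bound by (intro mult_mono) auto
    then show "\<bar>?b \<theta> y\<bar> \<le> M0" by (simp add: abs_mult)
  qed auto
  ultimately show thesis
    using that by (simp add: abs_mult mult_left_mono)
qed

lemma periodic_shift_int:
  fixes F :: "'a::real_vector \<Rightarrow> 'b"
  assumes periodic: "\<And>x. F (x + a) = F x"
  shows "F (x + of_int k *\<^sub>R a) = F x"
proof (induction k rule: int_induct[where k=0])
  case (step1 i)
  have "F (x + of_int (i + 1) *\<^sub>R a) = F ((x + of_int i *\<^sub>R a) + a)"
    by (simp add: algebra_simps)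
  also have "\<dots> = F x" using step1.IH periodic by simp
  finally show ?case .
next
  case (step2 i)
  have "F (x + of_int (i - 1) *\<^sub>R a) = F ((x + of_int (i - 1) *\<^sub>R a) + a)"
    using periodic by simp
  also have "\<dots> = F x" using step2.IH by (simp add: algebra_simps)
  finally show ?case .
qed simp

lemma periodic_shift_axis_sum:
  fixes F :: "real^'n \<Rightarrow> 'b"
  assumes periodic: "\<And>x i. F (x + L *\<^sub>R axis i 1) = F x" and "finite I"
  shows "F (x + (\<Sum>i\<in>I. (of_int (k i) * L) *\<^sub>R axis i 1)) = F x"
  using \<open>finite I\<close>
proof (induction I arbitrary: x rule: finite_induct)
  case (insert j I)
  have "x + (\<Sum>i\<in>insert j I. (of_int (k i) * L) *\<^sub>R axis i 1)
      = (x + of_int (k j) *\<^sub>R (L *\<^sub>R axis j 1)) + (\<Sum>i\<in>I. (of_int (k i) * L) *\<^sub>R axis i 1)"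
    using insert by (simp add: algebra_simps)
  then have "F (x + (\<Sum>i\<in>insert j I. (of_int (k i) * L) *\<^sub>R axis i 1))
      = F ((x + of_int (k j) *\<^sub>R (L *\<^sub>R axis j 1)) + (\<Sum>i\<in>I. (of_int (k i) * L) *\<^sub>R axis i 1))"
    by (rule arg_cong)
  also have "\<dots> = F (x + of_int (k j) *\<^sub>R (L *\<^sub>R axis j 1))" by (rule insert.IH)
  also have "\<dots> = F x" by (rule periodic_shift_int) (rule periodic)
  finally show ?case .
qed simp

lemma periodic_field_reduce:
  fixes F :: "'d::finite field"
  assumes "L > 0" and periodic: "periodic_field L F"
  obtains x' th' where "x' \<in> cbox 0 (\<chi> i. L)" and "th' \<in> {0..2*pi}" and "F t x th = F t x' th'"
proof
  define k where "k i = \<lfloor>x $ i / L\<rfloor>" for i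
  define x' where "x' = (\<chi> i. x $ i - L * of_int (k i))"
  define m where "m = \<lfloor>th / (2 * pi)\<rfloor>"
  have "0 \<le> x' $ i \<and> x' $ i \<le> L" for i
  proof -
    have "of_int (k i) * L \<le> x $ i" "x $ i < (of_int (k i) + 1) * L"
      unfolding k_def using \<open>L > 0\<close> by (rule floor_divide_lower, rule floor_divide_upper)
    then show ?thesis by (simp add: x'_def algebra_simps)
  qed
  then show "x' \<in> cbox 0 (\<chi> i. L)" by (simp add: mem_box_cart)
  show "th - 2 * pi * of_int m \<in> {0..2*pi}"
    using floor_divide_lower[of "2 * pi" th] floor_divide_upper[of "2 * pi" th]
    by (auto simp: m_def algebra_simps)
  have "x = x' + (\<Sum>i\<in>UNIV. (of_int (k i) * L) *\<^sub>R axis i 1)"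
    by (simp add: vec_eq_iff x'_def axis_def if_distrib[of "\<lambda>u. _ * u"] cong: if_cong)
  then have "F t x th = F t x' th"
    using periodic_shift_axis_sum[of "\<lambda>y. F t y th" L UNIV x' k] periodic
    by (simp add: periodic_field_def)
  also have "\<dots> = F t x' (th - 2 * pi * of_int m + of_int m *\<^sub>R (2 * pi))"
    by simp
  also have "\<dots> = F t x' (th - 2 * pi * of_int m)"
    using periodic by (intro periodic_shift_int) (simp add: periodic_field_def)
  finally show "F t x th = F t x' (th - 2 * pi * of_int m)" .
qed

lemma norm_blinfun_apply2_le:
  "\<bar>blinfun_apply (blinfun_apply F w) w\<bar> \<le> norm F * (norm w)\<^sup>2"
proof -
  have "\<bar>blinfun_apply (blinfun_apply F w) w\<bar> \<le> norm (blinfun_apply F w) * norm w"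
    using norm_blinfun[of "blinfun_apply F w" w] by simp
  also have "\<dots> \<le> norm F * norm w * norm w"
    by (intro mult_right_mono norm_blinfun) simp
  finally show ?thesis by (simp add: power2_eq_square mult_ac)
qed

lemma continuous_on_time_slice:
  assumes "continuous_on ({0..<T} \<times> UNIV \<times> UNIV) G" "t \<in> {0..<T}"
  shows "continuous_on UNIV (\<lambda>z. G (t, fst z, snd z))"
  using continuous_on_slice[of "{0..<T}" UNIV "\<lambda>t z. G (t, z)" t] assms by (simp add: case_prod_beta')

lemma partial_x_mult_at_critical:
  assumes "((\<lambda>r. F t (x + r *\<^sub>R axis i 1) th) has_real_derivative 0) (at 0)"
    and "((\<lambda>r. G t (x + r *\<^sub>R axis i 1) th) has_real_derivative D) (at 0)"
  shows "partial_x i (\<lambda>s y a. F s y a * G s y a) t x th = D * F t x th"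
  unfolding partial_x_def using DERIV_mult[OF assms] by (simp add: DERIV_imp_deriv)

lemma partial_th_mult_at_critical:
  assumes "(F t x has_real_derivative 0) (at th)" and "(G t x has_real_derivative D) (at th)"
  shows "partial_th (\<lambda>s y a. G s y a * F s y a) t x th = D * F t x th"
  unfolding partial_th_def using DERIV_mult[OF assms(2,1)] by (simp add: DERIV_imp_deriv)

locale C2_field =
  fixes R :: "'d::finite field" and T :: real
    and DR :: "real \<times> (real^'d) \<times> real \<Rightarrow> (real \<times> (real^'d) \<times> real) \<Rightarrow>\<^sub>L real"
    and D2R :: "real \<times> (real^'d) \<times> real \<Rightarrow>
      (real \<times> (real^'d) \<times> real) \<Rightarrow>\<^sub>L ((real \<times> (real^'d) \<times> real) \<Rightarrow>\<^sub>L real)"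
  assumes has_derivative_R:
      "\<And>p. fst p \<in> {0<..<T} \<Longrightarrow> (uncurry3 R has_derivative blinfun_apply (DR p)) (at p)"
    and has_derivative_DR: "\<And>p. fst p \<in> {0<..<T} \<Longrightarrow> (DR has_derivative blinfun_apply (D2R p)) (at p)"
    and continuous_R: "continuous_on ({0..<T} \<times> UNIV \<times> UNIV) (uncurry3 R)"
    and continuous_DR: "continuous_on ({0..<T} \<times> UNIV \<times> UNIV) DR"
    and continuous_D2R: "continuous_on ({0..<T} \<times> UNIV \<times> UNIV) D2R"
begin

lemma has_real_derivative_along_line:
  assumes "fst (p + r *\<^sub>R w) \<in> {0<..<T}"
  shows "((\<lambda>r. uncurry3 R (p + r *\<^sub>R w)) has_real_derivative DR (p + r *\<^sub>R w) w) (at r)"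
    and "((\<lambda>r. DR (p + r *\<^sub>R w) v) has_real_derivative D2R (p + r *\<^sub>R w) w v) (at r)"
proof -
  have line: "((\<lambda>r. p + r *\<^sub>R w) has_derivative (\<lambda>h. h *\<^sub>R w)) (at r)"
    by (auto intro!: derivative_eq_intros)
  show "((\<lambda>r. uncurry3 R (p + r *\<^sub>R w)) has_real_derivative DR (p + r *\<^sub>R w) w) (at r)"
    by (rule has_derivative_imp_has_field_derivative
        [OF has_derivative_compose[OF line has_derivative_R[OF assms]]])
      (simp add: blinfun.scaleR_right)
  have "bounded_linear (\<lambda>f :: _ \<Rightarrow>\<^sub>L real. blinfun_apply f v)"
    by (rule bounded_bilinear.bounded_linear_left[OF bounded_bilinear_blinfun_apply])
  then show "((\<lambda>r. DR (p + r *\<^sub>R w) v) has_real_derivative D2R (p + r *\<^sub>R w) w v) (at r)"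
    by (rule has_derivative_imp_has_field_derivative[OF bounded_linear.has_derivative
        [OF _ has_derivative_compose[OF line has_derivative_DR[OF assms]]]])
      (simp add: blinfun.scaleR_right blinfun.scaleR_left)
qed

context
  fixes t :: real assumes t: "0 < t" "t < T"
begin

lemma R_has_derivative_x:
  "((\<lambda>r. R t (x + r *\<^sub>R v) th) has_real_derivative DR (t, x + r *\<^sub>R v, th) (0, v, 0)) (at r)"
  using has_real_derivative_along_line(1)[of "(t, x, th)" r "(0, v, 0)"] t by (simp add: uncurry3_def)

lemma DR_has_derivative_x:
  "((\<lambda>r. DR (t, x + r *\<^sub>R v, th) u) has_real_derivative D2R (t, x + r *\<^sub>R v, th) (0, v, 0) u) (at r)"
  using has_real_derivative_along_line(2)[of "(t, x, th)" r "(0, v, 0)" u] t by simp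

lemma R_has_derivative_theta: "(R t x has_real_derivative DR (t, x, th) (0, 0, 1)) (at th)"
  using has_real_derivative_along_line(1)[of "(t, x, 0)" th "(0, 0, 1)"] t
  by (simp add: uncurry3_def)

lemma DR_has_derivative_theta:
  "((\<lambda>s. DR (t, x, s) u) has_real_derivative D2R (t, x, th) (0, 0, 1) u) (at th)"
  using has_real_derivative_along_line(2)[of "(t, x, 0)" th "(0, 0, 1)" u] t by simp

lemma R_has_derivative_t: "((\<lambda>s. R s x th) has_real_derivative DR (t, x, th) (1, 0, 0)) (at t)"
  using has_real_derivative_along_line(1)[of "(0, x, th)" t "(1, 0, 0)"] t
  by (simp add: uncurry3_def)

lemma partial_t_eq: "partial_t R t x th = DR (t, x, th) (1, 0, 0)"
  unfolding partial_t_def using R_has_derivative_t by (rule DERIV_imp_deriv)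

lemma partial_x_partial_x_eq:
  "partial_x i (partial_x i R) t x th = D2R (t, x, th) (0, axis i 1, 0) (0, axis i 1, 0)"
proof -
  have "partial_x i R t y a = DR (t, y, a) (0, axis i 1, 0)" for y a
    unfolding partial_x_def using R_has_derivative_x[of y "axis i 1" a 0] by (simp add: DERIV_imp_deriv)
  then show ?thesis
    unfolding partial_x_def[of i "partial_x i R"]
    using DR_has_derivative_x[of x "axis i 1" th "(0, axis i 1, 0)" 0] by (simp add: DERIV_imp_deriv)
qed

lemma partial_th_partial_th_eq: "partial_th (partial_th R) t x th = D2R (t, x, th) (0, 0, 1) (0, 0, 1)"
proof -
  have "partial_th R t x = (\<lambda>s. DR (t, x, s) (0, 0, 1))"
    unfolding partial_th_def using R_has_derivative_theta by (auto intro: DERIV_imp_deriv)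
  then show ?thesis
    unfolding partial_th_def[of "partial_th R"] using DR_has_derivative_theta by (simp add: DERIV_imp_deriv)
qed

lemma spatial_min_conditions:
  assumes min: "\<And>x' th'. R t x th \<le> R t x' th'"
  shows "DR (t, x, th) (0, v, 0) = 0" and "D2R (t, x, th) (0, v, 0) (0, v, 0) \<ge> 0"
    and "DR (t, x, th) (0, 0, 1) = 0" and "D2R (t, x, th) (0, 0, 1) (0, 0, 1) \<ge> 0"
proof -
  have "DR (t, x + 0 *\<^sub>R v, th) (0, v, 0) = 0 \<and> D2R (t, x + 0 *\<^sub>R v, th) (0, v, 0) (0, v, 0) \<ge> 0"
    using global_min_deriv_conditions[OF R_has_derivative_x[where x=x and v=v and th=th]
        DR_has_derivative_x[where x=x and v=v and th=th and r=0]] min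
    by simp
  then show "DR (t, x, th) (0, v, 0) = 0" and "D2R (t, x, th) (0, v, 0) (0, v, 0) \<ge> 0" by simp_all
  show "DR (t, x, th) (0, 0, 1) = 0" and "D2R (t, x, th) (0, 0, 1) (0, 0, 1) \<ge> 0"
    using global_min_deriv_conditions[OF R_has_derivative_theta[where x=x]
        DR_has_derivative_theta[where x=x and th=th]] min
    by simp_all
qed

lemma R_quadratic_remainder_x:
  assumes bound: "\<And>r. \<bar>r\<bar> \<le> \<bar>h\<bar> \<Longrightarrow> norm (D2R (t, z + r *\<^sub>R v, \<theta>)) \<le> M"
  shows "\<bar>R t (z + h *\<^sub>R v) \<theta> - R t z \<theta> - h * DR (t, z, \<theta>) (0, v, 0)\<bar> \<le> M * (norm v)\<^sup>2 * h\<^sup>2"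
proof -
  have "\<bar>R t (z + h *\<^sub>R v) \<theta> - R t (z + 0 *\<^sub>R v) \<theta> - h * DR (t, z + 0 *\<^sub>R v, \<theta>) (0, v, 0)\<bar>
      \<le> M * (norm v)\<^sup>2 * h\<^sup>2"
  proof (rule quadratic_remainder_bound[OF R_has_derivative_x DR_has_derivative_x])
    fix r :: real assume "\<bar>r\<bar> \<le> \<bar>h\<bar>"
    have "\<bar>D2R (t, z + r *\<^sub>R v, \<theta>) (0, v, 0) (0, v, 0)\<bar> \<le> norm (D2R (t, z + r *\<^sub>R v, \<theta>)) * (norm v)\<^sup>2"
      using norm_blinfun_apply2_le[of _ "(0, v, 0)"] by (simp add: norm_Pair)
    also have "\<dots> \<le> M * (norm v)\<^sup>2" using bound[OF \<open>\<bar>r\<bar> \<le> \<bar>h\<bar>\<close>] by (simp add: mult_right_mono)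
    finally show "\<bar>D2R (t, z + r *\<^sub>R v, \<theta>) (0, v, 0) (0, v, 0)\<bar> \<le> M * (norm v)\<^sup>2" .
  qed
  then show ?thesis by simp
qed

lemma v1_has_vector_derivative_axis:
  assumes DR_bound: "\<And>y \<theta>. y \<in> ball 0 \<rho> \<Longrightarrow> \<theta> \<in> {0..2*pi} \<Longrightarrow> norm (DR (t, x + y, \<theta>)) \<le> M1"
    and D2R_bound: "\<And>y \<theta> r. y \<in> ball 0 \<rho> \<Longrightarrow> \<theta> \<in> {0..2*pi} \<Longrightarrow> \<bar>r\<bar> \<le> 1 \<Longrightarrow>
      norm (D2R (t, x + y + r *\<^sub>R axis i 1, \<theta>)) \<le> M2"
  obtains D where "((\<lambda>s. v1 J0 J \<rho> R t (x + s *\<^sub>R axis i 1) th) has_vector_derivative D) (at 0)"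
    and "norm D \<le> 2 * pi * (measure lebesgue (ball (0::real^'d) \<rho>) * ((\<bar>J0\<bar> + \<bar>J\<bar>) * M1))"
proof (rule v1_has_vector_derivative_along[where Rx="\<lambda>z \<theta>. DR (t, z, \<theta>) (0, axis i 1, 0)"])
  show "continuous_on UNIV (\<lambda>z::(real^'d) \<times> real. R t (fst z) (snd z))"
    using continuous_on_time_slice[OF continuous_R, of t] t by (simp add: uncurry3_def)
  show "continuous_on UNIV (\<lambda>z::(real^'d) \<times> real. DR (t, fst z, snd z) (0, axis i 1, 0))"
    using continuous_on_time_slice[OF continuous_DR, of t] t by (intro continuous_intros) auto
  fix y :: "real^'d" and \<theta> :: real assume y: "y \<in> ball 0 \<rho>" and \<theta>: "\<theta> \<in> {0..2*pi}"
  show "\<bar>DR (t, x + y, \<theta>) (0, axis i 1, 0)\<bar> \<le> M1"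
    using norm_blinfun[of "DR (t, x + y, \<theta>)" "(0, axis i 1, 0)"] DR_bound[OF y \<theta>] by (simp add: norm_Pair)
  fix h :: real assume "\<bar>h\<bar> \<le> 1"
  then have "\<bar>R t (x + y + h *\<^sub>R axis i 1) \<theta> - R t (x + y) \<theta> - h * DR (t, x + y, \<theta>) (0, axis i 1, 0)\<bar>
      \<le> M2 * (norm (axis i (1::real)))\<^sup>2 * h\<^sup>2"
    using D2R_bound[OF y \<theta>] by (intro R_quadratic_remainder_x) auto
  then show "\<bar>R t (x + h *\<^sub>R axis i 1 + y) \<theta> - R t (x + y) \<theta> - h * DR (t, x + y, \<theta>) (0, axis i 1, 0)\<bar>
      \<le> M2 * h\<^sup>2"
    by (simp add: add_ac)
qed (rule that)

end

end

section \<open>Minimum principle\<close>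

lemma first_nonpositive_time:
  fixes g :: "real \<Rightarrow> 'a::metric_space \<Rightarrow> real"
  assumes "compact Z" and g: "continuous_on ({0..T'} \<times> Z) (\<lambda>(t, z). g t z)"
    and initial_pos: "\<And>z. z \<in> Z \<Longrightarrow> g 0 z > 0"
    and "t0 \<in> {0..T'}" "z0 \<in> Z" "g t0 z0 \<le> 0"
  obtains ts zs where "ts \<in> {0<..T'}" "zs \<in> Z" "g ts zs = 0"
    and "\<And>z. z \<in> Z \<Longrightarrow> g ts z \<ge> 0" and "\<And>s z. s \<in> {0..<ts} \<Longrightarrow> z \<in> Z \<Longrightarrow> g s z > 0"
proof -
  define A where "A = ({0..T'} \<times> Z) \<inter> (\<lambda>(t, z). g t z) -` {..0}"
  have K: "compact ({0..T'} \<times> Z)" using \<open>compact Z\<close> by (intro compact_Times compact_Icc)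
  then have "closed A"
    unfolding A_def by (intro continuous_closed_preimage[OF g] compact_imp_closed closed_atMost)
  then have "compact A" using compact_Int_closed[OF K \<open>closed A\<close>] by (simp add: A_def)
  then have "compact (fst ` A)" by (intro compact_continuous_image continuous_intros)
  moreover have "(t0, z0) \<in> A" using assms unfolding A_def by simp
  ultimately obtain ts where ts: "ts \<in> fst ` A" and first: "\<And>s. s \<in> fst ` A \<Longrightarrow> ts \<le> s"
    using compact_attains_inf[of "fst ` A"] by blast
  then obtain zs where "(ts, zs) \<in> A" by force
  then have ts_range: "ts \<in> {0..T'}" and zs: "zs \<in> Z" and "g ts zs \<le> 0" by (auto simp: A_def)
  have before: "g s z > 0" if "s \<in> {0..<ts}" "z \<in> Z" for s z
  proof (rule ccontr)
    assume "\<not> g s z > 0"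
    then have "(s, z) \<in> A" using that ts_range unfolding A_def by auto
    then have "ts \<le> s" using first[of s] by force
    then show False using that by simp
  qed
  have "ts \<noteq> 0" using initial_pos[OF zs] \<open>g ts zs \<le> 0\<close> by auto
  then have "0 < ts" using ts_range by simp
  have at_ts: "g ts z \<ge> 0" if "z \<in> Z" for z
  proof (rule continuous_ge_on_closure[where S="{0..<ts}" and f="\<lambda>s. g s z"])
    have "continuous_on {0..ts} (\<lambda>s. (s, z))" by (intro continuous_intros)
    moreover have "(\<lambda>s. (s, z)) ` {0..ts} \<subseteq> {0..T'} \<times> Z" using ts_range that by auto
    ultimately have "continuous_on {0..ts} (\<lambda>s. (\<lambda>(t, z). g t z) (s, z))"
      by (rule continuous_on_compose2[OF g])
    then show "continuous_on (closure {0..<ts}) (\<lambda>s. g s z)" using \<open>0 < ts\<close> by simp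
  qed (use \<open>0 < ts\<close> before[of _ z] that in \<open>auto intro: less_imp_le\<close>)
  show thesis
  proof (rule that)
    show "ts \<in> {0<..T'}" using \<open>0 < ts\<close> ts_range by simp
    show "g ts zs = 0" using \<open>g ts zs \<le> 0\<close> at_ts[OF zs] by simp
  qed (use zs at_ts before in auto)
qed

locale nonlocal_solution = C2_field R T DR D2R
  for R :: "'d::finite field" and T DR D2R +
  fixes L \<rho> Dx Dth J0 J K :: real
  assumes L_pos: "L > 0" and Dx_nonneg: "Dx \<ge> 0" and Dth_nonneg: "Dth \<ge> 0"
    and periodic: "periodic_field L R"
    and pde: "\<And>t x th. 0 < t \<Longrightarrow> t < T \<Longrightarrow>
      partial_t R t x th =
        Dx * laplace_x R t x th
        - div_x (\<lambda>s y a. R s y a *\<^sub>R v1 J0 J \<rho> R s y a) t x th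
        + Dth * partial_th (partial_th R) t x th
        - partial_th (\<lambda>s y a. v2 K \<rho> R s y a * R s y a) t x th"
    and initial_nonneg: "\<And>x th. R 0 x th \<ge> 0"
begin

context
  fixes t :: real and x :: "real^'d" and th :: real
  assumes t: "0 < t" "t < T" and min: "\<And>x' th'. R t x th \<le> R t x' th'"
begin

lemma div_x_flux_at_spatial_min:
  assumes DR_bound: "\<And>y \<theta>. y \<in> ball 0 \<rho> \<Longrightarrow> \<theta> \<in> {0..2*pi} \<Longrightarrow> norm (DR (t, x + y, \<theta>)) \<le> M1"
    and D2R_bound: "\<And>y \<theta> r i. y \<in> ball 0 \<rho> \<Longrightarrow> \<theta> \<in> {0..2*pi} \<Longrightarrow> \<bar>r\<bar> \<le> 1 \<Longrightarrow>
      norm (D2R (t, x + y + r *\<^sub>R axis i 1, \<theta>)) \<le> M2"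
  obtains s where "div_x (\<lambda>s y a. R s y a *\<^sub>R v1 J0 J \<rho> R s y a) t x th = s * R t x th"
    and "\<bar>s\<bar> \<le> of_nat CARD('d) * (2 * pi * (measure lebesgue (ball (0::real^'d) \<rho>) * ((\<bar>J0\<bar> + \<bar>J\<bar>) * M1)))"
proof -
  let ?B = "2 * pi * (measure lebesgue (ball (0::real^'d) \<rho>) * ((\<bar>J0\<bar> + \<bar>J\<bar>) * M1))"
  have "\<exists>D. ((\<lambda>s. v1 J0 J \<rho> R t (x + s *\<^sub>R axis i 1) th) has_vector_derivative D) (at 0)
      \<and> norm D \<le> ?B" for i
  proof -
    obtain D where "((\<lambda>s. v1 J0 J \<rho> R t (x + s *\<^sub>R axis i 1) th) has_vector_derivative D) (at 0)"
      and "norm D \<le> ?B"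
      by (rule v1_has_vector_derivative_axis[OF t DR_bound D2R_bound])
    then show ?thesis by blast
  qed
  then obtain D where D: "\<And>i. ((\<lambda>s. v1 J0 J \<rho> R t (x + s *\<^sub>R axis i 1) th) has_vector_derivative D i) (at 0)"
    and D_bound: "\<And>i. norm (D i) \<le> ?B"
    by metis
  have "partial_x i (\<lambda>s y a. (R s y a *\<^sub>R v1 J0 J \<rho> R s y a) $ i) t x th = D i $ i * R t x th" for i
  proof -
    have "((\<lambda>s. v1 J0 J \<rho> R t (x + s *\<^sub>R axis i 1) th $ i) has_real_derivative D i $ i) (at 0)"
      using bounded_linear.has_derivative[OF bounded_linear_vec_nth D[of i, unfolded has_vector_derivative_def]]
      by (rule has_derivative_imp_has_field_derivative) simp
    moreover have "((\<lambda>r. R t (x + r *\<^sub>R axis i 1) th) has_real_derivative 0) (at 0)"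
      using R_has_derivative_x[OF t, of x "axis i 1" th 0] spatial_min_conditions(1)[OF t min] by simp
    ultimately show ?thesis
      using partial_x_mult_at_critical[of R t x i th "\<lambda>s y a. v1 J0 J \<rho> R s y a $ i"] by simp
  qed
  then have "div_x (\<lambda>s y a. R s y a *\<^sub>R v1 J0 J \<rho> R s y a) t x th = (\<Sum>i\<in>UNIV. D i $ i) * R t x th"
    by (simp add: div_x_def sum_distrib_right)
  moreover have "\<bar>\<Sum>i\<in>UNIV. D i $ i\<bar> \<le> of_nat CARD('d) * ?B"
  proof -
    have "\<bar>\<Sum>i\<in>UNIV. D i $ i\<bar> \<le> (\<Sum>i\<in>(UNIV::'d set). ?B)"
      by (rule order_trans[OF sum_abs sum_mono]) (rule order_trans[OF component_le_norm_cart D_bound])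
    then show ?thesis by simp
  qed
  ultimately show thesis by (rule that)
qed

lemma partial_th_flux_at_spatial_min:
  assumes R_bound: "\<And>y \<theta>. y \<in> ball 0 \<rho> \<Longrightarrow> \<theta> \<in> {0..2*pi} \<Longrightarrow> \<bar>R t (x + y) \<theta>\<bar> \<le> M0"
  obtains s where "partial_th (\<lambda>s y a. v2 K \<rho> R s y a * R s y a) t x th = s * R t x th"
    and "\<bar>s\<bar> \<le> \<bar>K\<bar> * (2 * pi * (measure lebesgue (ball (0::real^'d) \<rho>) * M0))"
proof -
  have "continuous_on UNIV (\<lambda>z::(real^'d) \<times> real. R t (fst z) (snd z))"
    using continuous_on_time_slice[OF continuous_R, of t] t by (simp add: uncurry3_def)
  then obtain D where D: "(v2 K \<rho> R t x has_real_derivative D) (at th)"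
    and "\<bar>D\<bar> \<le> \<bar>K\<bar> * (2 * pi * (measure lebesgue (ball (0::real^'d) \<rho>) * M0))"
    using v2_has_real_derivative_theta R_bound by blast
  moreover have "(R t x has_real_derivative 0) (at th)"
    using R_has_derivative_theta[OF t, of x th] spatial_min_conditions(3)[OF t min] by simp
  ultimately show thesis
    using partial_th_mult_at_critical[where F=R and G="\<lambda>s y a. v2 K \<rho> R s y a"] that by blast
qed

lemma partial_t_ge_at_nonpositive_spatial_min:
  assumes nonpos: "R t x th \<le> 0"
    and R_bound: "\<And>y \<theta>. y \<in> ball 0 \<rho> \<Longrightarrow> \<theta> \<in> {0..2*pi} \<Longrightarrow> \<bar>R t (x + y) \<theta>\<bar> \<le> M0"
    and DR_bound: "\<And>y \<theta>. y \<in> ball 0 \<rho> \<Longrightarrow> \<theta> \<in> {0..2*pi} \<Longrightarrow> norm (DR (t, x + y, \<theta>)) \<le> M1"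
    and D2R_bound: "\<And>y \<theta> r i. y \<in> ball 0 \<rho> \<Longrightarrow> \<theta> \<in> {0..2*pi} \<Longrightarrow> \<bar>r\<bar> \<le> 1 \<Longrightarrow>
      norm (D2R (t, x + y + r *\<^sub>R axis i 1, \<theta>)) \<le> M2"
  shows "partial_t R t x th \<ge>
    (of_nat CARD('d) * (2 * pi * (measure lebesgue (ball (0::real^'d) \<rho>) * ((\<bar>J0\<bar> + \<bar>J\<bar>) * M1)))
      + \<bar>K\<bar> * (2 * pi * (measure lebesgue (ball (0::real^'d) \<rho>) * M0))) * R t x th"
    (is "_ \<ge> ?C * _")
proof -
  obtain s1 where s1: "div_x (\<lambda>s y a. R s y a *\<^sub>R v1 J0 J \<rho> R s y a) t x th = s1 * R t x th"
    and s1_bound: "\<bar>s1\<bar> \<le> of_nat CARD('d) * (2 * pi * (measure lebesgue (ball (0::real^'d) \<rho>) * ((\<bar>J0\<bar> + \<bar>J\<bar>) * M1)))"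
    using div_x_flux_at_spatial_min DR_bound D2R_bound by blast
  obtain s2 where s2: "partial_th (\<lambda>s y a. v2 K \<rho> R s y a * R s y a) t x th = s2 * R t x th"
    and s2_bound: "\<bar>s2\<bar> \<le> \<bar>K\<bar> * (2 * pi * (measure lebesgue (ball (0::real^'d) \<rho>) * M0))"
    using partial_th_flux_at_spatial_min R_bound by blast
  have "partial_t R t x th = Dx * laplace_x R t x th + Dth * partial_th (partial_th R) t x th
      - (s1 + s2) * R t x th"
    using pde[OF t, of x th] unfolding s1 s2 by (simp add: algebra_simps)
  moreover have "Dx * laplace_x R t x th \<ge> 0"
    using Dx_nonneg spatial_min_conditions(2)[OF t min]
    by (simp add: laplace_x_def partial_x_partial_x_eq[OF t] sum_nonneg)
  moreover have "Dth * partial_th (partial_th R) t x th \<ge> 0"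
    using Dth_nonneg spatial_min_conditions(4)[OF t min] by (simp add: partial_th_partial_th_eq[OF t])
  moreover have "(?C + (s1 + s2)) * R t x th \<le> 0"
    using s1_bound s2_bound nonpos by (intro mult_nonneg_nonpos) auto
  ultimately show ?thesis by (simp add: distrib_right)
qed

end

lemma partial_t_ge_at_spatial_min_up_to:
  assumes "T' < T"
  obtains C where "\<And>t x th. t \<in> {0<..T'} \<Longrightarrow> x \<in> cbox 0 (\<chi> i. L) \<Longrightarrow>
      (\<And>x' th'. R t x th \<le> R t x' th') \<Longrightarrow> R t x th \<le> 0 \<Longrightarrow> partial_t R t x th \<ge> C * R t x th"
proof -
  obtain r where r: "\<And>x::real^'d. x \<in> cbox 0 (\<chi> i. L) \<Longrightarrow> norm x \<le> r"
    using compact_imp_bounded[OF compact_cbox] unfolding bounded_iff by blast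
  define Q where "Q = {0..T'} \<times> cball (0::real^'d) (r + \<rho> + 1) \<times> {0..2*pi}"
  have Q: "compact Q" "Q \<subseteq> {0..<T} \<times> UNIV \<times> UNIV"
    using \<open>T' < T\<close> unfolding Q_def by (auto intro!: compact_Times)
  obtain M0 where M0: "\<And>p. p \<in> Q \<Longrightarrow> norm (uncurry3 R p) \<le> M0"
    using continuous_on_compact_bound[OF Q(1) continuous_on_subset[OF continuous_R Q(2)]] by blast
  obtain M1 where M1: "\<And>p. p \<in> Q \<Longrightarrow> norm (DR p) \<le> M1"
    using continuous_on_compact_bound[OF Q(1) continuous_on_subset[OF continuous_DR Q(2)]] by blast
  obtain M2 where M2: "\<And>p. p \<in> Q \<Longrightarrow> norm (D2R p) \<le> M2"
    using continuous_on_compact_bound[OF Q(1) continuous_on_subset[OF continuous_D2R Q(2)]] by blast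
  show thesis
  proof (rule that)
    fix t x th assume t: "t \<in> {0<..T'}" and x: "x \<in> cbox 0 (\<chi> i. L)"
      and min: "\<And>x' th'. R t x th \<le> R t x' th'" and nonpos: "R t x th \<le> 0"
    have near: "(t, x + y + s *\<^sub>R axis i 1, \<theta>) \<in> Q"
      if "y \<in> ball 0 \<rho>" "\<theta> \<in> {0..2*pi}" "\<bar>s\<bar> \<le> 1" for y \<theta> s i
    proof -
      have "norm (x + y + s *\<^sub>R axis i 1) \<le> norm x + norm y + norm (s *\<^sub>R axis i (1::real))"
        by (rule order_trans[OF norm_triangle_ineq add_right_mono[OF norm_triangle_ineq]])
      also have "\<dots> \<le> r + \<rho> + 1" using r[OF x] that by (auto simp: dist_norm)
      finally show ?thesis using that t unfolding Q_def by auto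
    qed
    have near0: "(t, x + y, \<theta>) \<in> Q" if "y \<in> ball 0 \<rho>" "\<theta> \<in> {0..2*pi}" for y \<theta>
      using near[OF that, of 0] by simp
    show "partial_t R t x th \<ge>
      (of_nat CARD('d) * (2 * pi * (measure lebesgue (ball (0::real^'d) \<rho>) * ((\<bar>J0\<bar> + \<bar>J\<bar>) * M1)))
        + \<bar>K\<bar> * (2 * pi * (measure lebesgue (ball (0::real^'d) \<rho>) * M0))) * R t x th"
    proof (rule partial_t_ge_at_nonpositive_spatial_min[where ?M2.0=M2])
      show "\<bar>R t (x + y) \<theta>\<bar> \<le> M0" if "y \<in> ball 0 \<rho>" "\<theta> \<in> {0..2*pi}" for y \<theta>
        using M0[OF near0[OF that]] by (simp add: uncurry3_def)
    qed (use t \<open>T' < T\<close> min nonpos M1 near0 M2 near in auto)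
  qed
qed

lemma exponential_barrier_no_first_touch:
  assumes ts: "0 < ts" "ts < T" and "\<epsilon> > 0" and "C < rate"
    and slope: "partial_t R ts x th \<ge> C * R ts x th"
    and touch: "R ts x th + \<epsilon> * exp (rate * ts) = 0"
    and before: "\<And>s. 0 \<le> s \<Longrightarrow> s < ts \<Longrightarrow> R s x th + \<epsilon> * exp (rate * s) > 0"
  shows False
proof -
  have "partial_t R ts x th + \<epsilon> * (exp (rate * ts) * rate) \<le> 0"
  proof (rule has_real_derivative_nonpos_at_left_min[where f="\<lambda>s. R s x th + \<epsilon> * exp (rate * s)" and a=0])
    show "((\<lambda>s. R s x th + \<epsilon> * exp (rate * s)) has_real_derivative
        partial_t R ts x th + \<epsilon> * (exp (rate * ts) * rate)) (at ts)"
      unfolding partial_t_eq[OF ts] by (auto intro!: derivative_eq_intros R_has_derivative_t ts)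
  qed (use ts touch before in \<open>auto intro: less_imp_le\<close>)
  moreover have "R ts x th = - (\<epsilon> * exp (rate * ts))" using touch by simp
  ultimately have "\<epsilon> * exp (rate * ts) * (rate - C) \<le> 0"
    using slope by (simp add: algebra_simps)
  moreover have "\<epsilon> * exp (rate * ts) * (rate - C) > 0"
    using \<open>\<epsilon> > 0\<close> \<open>C < rate\<close> by simp
  ultimately show False by simp
qed

lemma exponential_barrier_pos:
  assumes "0 \<le> t" "t < T" and "\<epsilon> > 0" and "C < rate"
    and slope: "\<And>t' x th. t' \<in> {0<..t} \<Longrightarrow> x \<in> cbox 0 (\<chi> i. L) \<Longrightarrow>
      (\<And>x' th'. R t' x th \<le> R t' x' th') \<Longrightarrow> R t' x th \<le> 0 \<Longrightarrow> partial_t R t' x th \<ge> C * R t' x th"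
  shows "R t x th + \<epsilon> * exp (rate * t) > 0"
proof (rule ccontr)
  assume "\<not> R t x th + \<epsilon> * exp (rate * t) > 0"
  obtain x0 th0 where x0: "x0 \<in> cbox 0 (\<chi> i. L)" "th0 \<in> {0..2*pi}" and "R t x th = R t x0 th0"
    using periodic_field_reduce[OF L_pos periodic] by blast
  define g where "g s z = R s (fst z) (snd z) + \<epsilon> * exp (rate * s)" for s z
  let ?Z = "cbox 0 (\<chi> i. L) \<times> {0..2*pi}"
  have "continuous_on ({0..t} \<times> ?Z) (uncurry3 R)"
    by (rule continuous_on_subset[OF continuous_R]) (use \<open>t < T\<close> in auto)
  then have "continuous_on ({0..t} \<times> ?Z) (\<lambda>p. uncurry3 R p + \<epsilon> * exp (rate * fst p))"
    by (intro continuous_intros)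
  then have cont: "continuous_on ({0..t} \<times> ?Z) (\<lambda>(s, z). g s z)"
    by (simp add: g_def uncurry3_def case_prod_beta')
  have pos: "g 0 z > 0" for z
    using initial_nonneg \<open>\<epsilon> > 0\<close> by (simp add: g_def add_nonneg_pos)
  have Z: "compact ?Z" by (intro compact_Times compact_cbox compact_Icc)
  obtain ts xs ths where ts: "ts \<in> {0<..t}" and xs: "(xs, ths) \<in> ?Z" and touch: "g ts (xs, ths) = 0"
    and after: "\<And>z. z \<in> ?Z \<Longrightarrow> g ts z \<ge> 0"
    and before: "\<And>s z. s \<in> {0..<ts} \<Longrightarrow> z \<in> ?Z \<Longrightarrow> g s z > 0"
    by (rule first_nonpositive_time[OF Z cont pos, of t "(x0, th0)"])
      (use \<open>0 \<le> t\<close> x0 \<open>\<not> R t x th + _ > 0\<close> \<open>R t x th = R t x0 th0\<close> in \<open>auto simp: g_def\<close>)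
  have min: "R ts xs ths \<le> R ts x' th'" for x' th'
  proof -
    obtain x1 th1 where "x1 \<in> cbox 0 (\<chi> i. L)" "th1 \<in> {0..2*pi}" and "R ts x' th' = R ts x1 th1"
      using periodic_field_reduce[OF L_pos periodic] by blast
    then show ?thesis using after[of "(x1, th1)"] touch by (simp add: g_def)
  qed
  have "R ts xs ths = - (\<epsilon> * exp (rate * ts))" using touch by (simp add: g_def)
  then have "partial_t R ts xs ths \<ge> C * R ts xs ths"
    using xs \<open>\<epsilon> > 0\<close> by (intro slope[OF ts _ min]) auto
  then show False
    using exponential_barrier_no_first_touch[of ts \<epsilon> C rate xs ths] ts \<open>t < T\<close> \<open>\<epsilon> > 0\<close> \<open>C < rate\<close>
      touch before[of _ "(xs, ths)"] xs
    by (auto simp: g_def)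
qed

lemma R_nonneg:
  assumes "0 \<le> t" "t < T"
  shows "R t x th \<ge> 0"
proof (rule ccontr)
  assume "\<not> R t x th \<ge> 0"
  obtain C where "\<And>t' x th. t' \<in> {0<..t} \<Longrightarrow> x \<in> cbox 0 (\<chi> i. L) \<Longrightarrow>
      (\<And>x' th'. R t' x th \<le> R t' x' th') \<Longrightarrow> R t' x th \<le> 0 \<Longrightarrow> partial_t R t' x th \<ge> C * R t' x th"
    using partial_t_ge_at_spatial_min_up_to[OF \<open>t < T\<close>] by blast
  then have "R t x th + - R t x th / (2 * exp ((C + 1) * t)) * exp ((C + 1) * t) > 0"
    using \<open>\<not> R t x th \<ge> 0\<close> assms by (intro exponential_barrier_pos) (auto intro: divide_neg_pos)
  then show False using \<open>\<not> R t x th \<ge> 0\<close> by simp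
qed

end

theorem mainTheorem1:
  fixes R :: "real \<Rightarrow> real ^ 'd \<Rightarrow> real \<Rightarrow> real"
    and R0 :: "real ^ 'd \<Rightarrow> real \<Rightarrow> real"
    and L \<rho> Dx Dth J0 J K T :: real
  assumes "L > 0" and "\<rho> > 0" and "Dx > 0" and "Dth \<ge> 0" and "T > 0"
    and periodic: "periodic_field L R"
    and C2: "C2_on ({0..<T} \<times> UNIV \<times> UNIV) (uncurry3 R)"
    and pde: "\<And>t x th. 0 < t \<Longrightarrow> t < T \<Longrightarrow>
      partial_t R t x th =
        Dx * laplace_x R t x th
        - div_x (\<lambda>s y a. R s y a *\<^sub>R v1 J0 J \<rho> R s y a) t x th
        + Dth * partial_th (partial_th R) t x th
        - partial_th (\<lambda>s y a. v2 K \<rho> R s y a * R s y a) t x th"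
    and init: "\<And>x th. R 0 x th = R0 x th"
    and R0_nonneg: "\<And>x th. R0 x th \<ge> 0"
    and R0_cont: "continuous_on UNIV (\<lambda>p. R0 (fst p) (snd p))"
  shows "\<forall>t x th. 0 \<le> t \<and> t < T \<longrightarrow> R t x th \<ge> 0"
proof -
  let ?S = "{0..<T} \<times> (UNIV :: (real^'d) set) \<times> (UNIV :: real set)"
  obtain DR D2R where DR: "\<forall>p\<in>?S. (uncurry3 R has_derivative blinfun_apply (DR p)) (at p within ?S)"
    and DR_cont: "continuous_on ?S DR"
    and D2R: "\<forall>p\<in>?S. (DR has_derivative blinfun_apply (D2R p)) (at p within ?S)"
    and D2R_cont: "continuous_on ?S D2R"
    using C2 unfolding C2_on_def by blast
  have at_interior: "p \<in> ?S \<and> at p within ?S = at p" if "fst p \<in> {0<..<T}" for p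
  proof -
    have "interior ?S = {0<..<T} \<times> UNIV \<times> UNIV" by (simp add: interior_Times)
    then show ?thesis using that by (cases p) (auto intro: at_within_interior)
  qed
  interpret nonlocal_solution R T DR D2R L \<rho> Dx Dth J0 J K
  proof
    show "continuous_on ?S (uncurry3 R)"
      using DR has_derivative_continuous by (blast intro: continuous_on_eq_continuous_within[THEN iffD2])
    show "(uncurry3 R has_derivative blinfun_apply (DR p)) (at p)" if "fst p \<in> {0<..<T}" for p
      using DR at_interior[OF that] by metis
    show "(DR has_derivative blinfun_apply (D2R p)) (at p)" if "fst p \<in> {0<..<T}" for p
      using D2R at_interior[OF that] by metis
  qed (use assms DR_cont D2R_cont in auto)
  show ?thesis using R_nonneg by blast
qed

end
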